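(* For parameters $a,b,t>0$ with $1/t<1/a<b<t$, the quantity $$Q(a,b;t)=\frac{I_1+I_3}{I_2}-\frac{J_1+J_3}{J_2}$$ does not depend on $\rho$, and if $Q(a,b;t)=0$ then there is a unique $\rho>0$ for which $I_1+I_3=J_1+J_3$ and $I_2=J_2$ hold.
   Context: Weierstrass data: for real $a,b,t>0$ with $1/t<1/a<b<t$ and $\rho>0$, set $\phi_1=-\rho\,(z+a)^{1/2}(z+1/b)^{-1/2}(z-1/a)^{1/2}(z-b)^{-1/2}[(z+t)(z+1/t)(z-1/t)(z-t)]^{-1/2}dz$ and $\phi_2=\rho^{-1}(z+a)^{-1/2}(z+1/b)^{1/2}(z-1/a)^{-1/2}(z-b)^{1/2}[(z+t)(z+1/t)(z-1/t)(z-t)]^{-1/2}dz$; let $v_1<\dots<v_8$ be $-t,-a,-1/b,-1/t,1/t,1/a,b,t$, and $I_k=\int_{v_k}^{v_{k+1}}|\phi_1|$, $J_k=\int_{v_k}^{v_{k+1}}|\phi_2|$ (integrals of absolute values of the coefficient functions over real intervals). *)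

theory Defs
  imports "HOL-Analysis.Analysis"
begin

text \<open>Absolute values of the coefficient functions of the Weierstrass data on the real line.
  For real z, |w^(1/2)| = sqrt |w| and |w^(-1/2)| = 1 / sqrt |w|.\<close>

definition quartic :: "real \<Rightarrow> real \<Rightarrow> real" where
  "quartic t z = (z + t) * (z + 1/t) * (z - 1/t) * (z - t)"

definition phi1_abs :: "real \<Rightarrow> real \<Rightarrow> real \<Rightarrow> real \<Rightarrow> real \<Rightarrow> real" where
  "phi1_abs a b t \<rho> z =
     \<rho> * sqrt \<bar>z + a\<bar> * sqrt \<bar>z - 1/a\<bar>
       / (sqrt \<bar>z + 1/b\<bar> * sqrt \<bar>z - b\<bar> * sqrt \<bar>quartic t z\<bar>)"

definition phi2_abs :: "real \<Rightarrow> real \<Rightarrow> real \<Rightarrow> real \<Rightarrow> real \<Rightarrow> real" where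
  "phi2_abs a b t \<rho> z =
     (1/\<rho>) * sqrt \<bar>z + 1/b\<bar> * sqrt \<bar>z - b\<bar>
       / (sqrt \<bar>z + a\<bar> * sqrt \<bar>z - 1/a\<bar> * sqrt \<bar>quartic t z\<bar>)"

text \<open>Vertices v_1 < ... < v_8 (indexed from 1).\<close>
definition vtx :: "real \<Rightarrow> real \<Rightarrow> real \<Rightarrow> nat \<Rightarrow> real" where
  "vtx a b t k = [-t, -a, -1/b, -1/t, 1/t, 1/a, b, t] ! (k - 1)"

definition Iint :: "real \<Rightarrow> real \<Rightarrow> real \<Rightarrow> real \<Rightarrow> nat \<Rightarrow> real" where
  "Iint a b t \<rho> k = integral {vtx a b t k .. vtx a b t (k+1)} (phi1_abs a b t \<rho>)"

definition Jint :: "real \<Rightarrow> real \<Rightarrow> real \<Rightarrow> real \<Rightarrow> nat \<Rightarrow> real" where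
  "Jint a b t \<rho> k = integral {vtx a b t k .. vtx a b t (k+1)} (phi2_abs a b t \<rho>)"

definition Qfun :: "real \<Rightarrow> real \<Rightarrow> real \<Rightarrow> real \<Rightarrow> real" where
  "Qfun a b t \<rho> =
     (Iint a b t \<rho> 1 + Iint a b t \<rho> 3) / Iint a b t \<rho> 2
     - (Jint a b t \<rho> 1 + Jint a b t \<rho> 3) / Jint a b t \<rho> 2"

end

theory Submission imports Defs begin

text \<open>Both coefficient functions are homogeneous in \<open>\<rho>\<close>, of degree 1 and -1, so every
  \<open>I\<^sub>k\<close> scales by \<open>\<rho>\<close> and every \<open>J\<^sub>k\<close> by \<open>1/\<rho>\<close>. Hence both ratios in \<open>Q\<close> are
  independent of \<open>\<rho>\<close>, and the two period conditions read \<open>\<rho>\<^sup>2 I\<^sub>2 = J\<^sub>2\<close> and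
  \<open>\<rho>\<^sup>2 (I\<^sub>1 + I\<^sub>3) = J\<^sub>1 + J\<^sub>3\<close> (with the integrals taken at \<open>\<rho> = 1\<close>). The first has the unique
  positive solution \<open>\<rho> = sqrt (J\<^sub>2 / I\<^sub>2)\<close> as soon as \<open>I\<^sub>2, J\<^sub>2 > 0\<close>, and \<open>Q = 0\<close> says exactly
  that this \<open>\<rho>\<close> solves the second. Positivity of \<open>I\<^sub>2\<close> and \<open>J\<^sub>2\<close> holds because on
  \<open>[-a, -1/b]\<close> each integrand is positive inside and has only an integrable
  inverse-square-root singularity at one endpoint.\<close>

lemma integrable_inverse_sqrt_dist_endpoint:
  fixes l r p :: real
  assumes "l < r" "p = l \<or> p = r"
  shows "(\<lambda>z. 1 / sqrt \<bar>z - p\<bar>) integrable_on {l..r}"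
  using assms(2)
proof
  assume p: "p = l"
  have "((\<lambda>z. 1 / sqrt \<bar>z - p\<bar>) has_integral 2 * sqrt (r - p) - 2 * sqrt (l - p)) {l..r}"
  proof (rule fundamental_theorem_of_calculus_interior)
    fix x assume "x \<in> {l<..<r}"
    then have "x - p > 0" using p by auto
    then show "((\<lambda>z. 2 * sqrt (z - p)) has_vector_derivative 1 / sqrt \<bar>x - p\<bar>) (at x)"
      unfolding has_real_derivative_iff_has_vector_derivative[symmetric]
      by (auto intro!: derivative_eq_intros simp: field_simps)
  qed (use assms in \<open>auto intro!: continuous_intros\<close>)
  then show ?thesis by blast
next
  assume p: "p = r"
  have "((\<lambda>z. 1 / sqrt \<bar>z - p\<bar>) has_integral (- 2 * sqrt (p - r)) - (- 2 * sqrt (p - l))) {l..r}"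
  proof (rule fundamental_theorem_of_calculus_interior)
    fix x assume "x \<in> {l<..<r}"
    then have "p - x > 0" using p by auto
    then show "((\<lambda>z. - 2 * sqrt (p - z)) has_vector_derivative 1 / sqrt \<bar>x - p\<bar>) (at x)"
      unfolding has_real_derivative_iff_has_vector_derivative[symmetric]
      by (auto intro!: derivative_eq_intros simp: field_simps abs_minus_commute)
  qed (use assms in \<open>auto intro!: continuous_intros\<close>)
  then show ?thesis by blast
qed

lemma integrable_endpoint_singularity:
  fixes h :: "real \<Rightarrow> real" and l r p :: real
  assumes lr: "l < r" and p: "p = l \<or> p = r" and h: "continuous_on {l..r} h"
  shows "(\<lambda>z. h z / sqrt \<bar>z - p\<bar>) integrable_on {l..r}"
proof -
  define f where "f z = h z / sqrt \<bar>z - p\<bar>" for z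
  define S where "S = {l..r} - {p}"
  have same_integrability: "g integrable_on {l..r} \<longleftrightarrow> g integrable_on S" for g :: "real \<Rightarrow> real"
    by (rule integrable_spike_set_eq) (auto simp: S_def intro: negligible_subset[of "{p}"])
  obtain C where C: "\<And>z. z \<in> {l..r} \<Longrightarrow> norm (h z) \<le> C"
    using compact_continuous_image[OF h compact_Icc] compact_imp_bounded bounded_iff
    by (metis image_eqI)
  have "continuous_on S f"
    unfolding f_def using continuous_on_subset[OF h, of S]
    by (intro continuous_intros) (auto simp: S_def)
  then have "f \<in> borel_measurable (lebesgue_on S)"
    by (rule continuous_imp_measurable_on_sets_lebesgue) (auto simp: S_def)
  moreover have "(\<lambda>z. C * (1 / sqrt \<bar>z - p\<bar>)) integrable_on S"
    using integrable_on_mult_right[OF integrable_inverse_sqrt_dist_endpoint[OF lr p]]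
    by (simp add: same_integrability)
  moreover have "norm (f z) \<le> C * (1 / sqrt \<bar>z - p\<bar>)" if "z \<in> S" for z
    using C[of z] that by (auto simp: f_def S_def abs_divide divide_right_mono)
  ultimately have "f absolutely_integrable_on S"
    by (intro measurable_bounded_by_integrable_imp_absolutely_integrable) (auto simp: S_def)
  then have "f integrable_on S"
    by (simp add: absolutely_integrable_on_def)
  then show ?thesis
    unfolding f_def[abs_def] by (simp add: same_integrability)
qed

text \<open>The integral is bounded below by that over the middle third, where the integrand is
  continuous and positive.\<close>

lemma integral_pos_endpoint_singularity:
  fixes h :: "real \<Rightarrow> real" and l r p :: real
  assumes lr: "l < r" and p: "p = l \<or> p = r" and h: "continuous_on {l..r} h"
    and h_nonneg: "\<And>z. z \<in> {l..r} \<Longrightarrow> 0 \<le> h z"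
    and h_pos: "\<And>z. z \<in> {l<..<r} \<Longrightarrow> 0 < h z"
  shows "0 < integral {l..r} (\<lambda>z. h z / sqrt \<bar>z - p\<bar>)"
proof -
  define f where "f z = h z / sqrt \<bar>z - p\<bar>" for z
  define m1 where "m1 = l + (r - l) / 3"
  define m2 where "m2 = r - (r - l) / 3"
  have m: "l < m1" "m1 < m2" "m2 < r" using lr by (auto simp: m1_def m2_def field_simps)
  have f_cont: "continuous_on {m1..m2} f"
    unfolding f_def using m p continuous_on_subset[OF h, of "{m1..m2}"]
    by (intro continuous_intros) auto
  have f_nonneg: "0 \<le> f z" if "z \<in> {l..r}" for z
    using h_nonneg[OF that] by (simp add: f_def)
  have "integral {m1..m2} f \<noteq> 0"
  proof
    assume "integral {m1..m2} f = 0"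
    then have "(f has_integral 0) (cbox m1 m2)"
      using integrable_continuous_real[OF f_cont] by (metis box_real(2) has_integral_integral)
    then have "f ((m1 + m2) / 2) = 0"
      by (rule has_integral_0_cbox_imp_0[rotated 2]) (use f_cont f_nonneg m in auto)
    moreover have "f ((m1 + m2) / 2) > 0"
      using h_pos[of "(m1 + m2) / 2"] m p by (auto simp: f_def)
    ultimately show False by simp
  qed
  moreover have "integral {m1..m2} f \<ge> 0"
    using integrable_continuous_real[OF f_cont] f_nonneg m by (intro integral_nonneg) auto
  moreover have "integral {m1..m2} f \<le> integral {l..r} f"
    using integrable_continuous_real[OF f_cont] integrable_endpoint_singularity[OF lr p h]
      f_nonneg m
    by (intro integral_subset_le) (auto simp: f_def[abs_def])
  ultimately show ?thesis unfolding f_def[abs_def] by linarith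
qed

lemma Iint_scale: "Iint a b t \<rho> k = \<rho> * Iint a b t 1 k"
proof -
  have "phi1_abs a b t \<rho> = (\<lambda>z. \<rho> * phi1_abs a b t 1 z)"
    by (simp add: phi1_abs_def fun_eq_iff)
  then show ?thesis unfolding Iint_def by simp
qed

lemma Jint_scale: "Jint a b t \<rho> k = Jint a b t 1 k / \<rho>"
proof -
  have "phi2_abs a b t \<rho> = (\<lambda>z. phi2_abs a b t 1 z / \<rho>)"
    by (simp add: phi2_abs_def fun_eq_iff)
  then show ?thesis unfolding Jint_def by simp
qed

lemma Qfun_scale_invariant:
  assumes "\<rho> \<noteq> 0"
  shows "Qfun a b t \<rho> = Qfun a b t 1"
  using assms unfolding Qfun_def Iint_scale[of a b t \<rho>] Jint_scale[of a b t \<rho>]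
  by (simp add: distrib_left[symmetric] add_divide_distrib[symmetric])

lemma Iint_Jint_2_pos:
  fixes a b t :: real
  assumes "a > 0" "b > 0" "t > 0" "1/t < 1/a" "1/a < b" "b < t"
  shows "Iint a b t 1 2 > 0" "Jint a b t 1 2 > 0"
proof -
  have "a < t" "1/t < 1/b" "-a < -1/b" "0 < 1/a" "0 < 1/b" "0 < 1/t"
    using assms by (simp_all add: field_simps)
  then have "z + t > 0" "z + 1/t < 0" "z - 1/t < 0" "z - t < 0" "z - b < 0" "z - 1/a < 0"
    if "z \<in> {-a..-1/b}" for z
    using that assms by (simp_all only: atLeastAtMost_iff) linarith+
  then have nonzero: "quartic t z \<noteq> 0" "z - b \<noteq> 0" "z - 1/a \<noteq> 0" if "z \<in> {-a..-1/b}" for z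
    using that unfolding quartic_def by fastforce+
  have vtx: "vtx a b t 2 = -a" "vtx a b t 3 = -1/b" by (simp_all add: vtx_def)
  define h1 where "h1 z = sqrt \<bar>z + a\<bar> * sqrt \<bar>z - 1/a\<bar> / (sqrt \<bar>z - b\<bar> * sqrt \<bar>quartic t z\<bar>)"
    for z
  define h2 where "h2 z = sqrt \<bar>z + 1/b\<bar> * sqrt \<bar>z - b\<bar> / (sqrt \<bar>z - 1/a\<bar> * sqrt \<bar>quartic t z\<bar>)"
    for z
  have "phi1_abs a b t 1 = (\<lambda>z. h1 z / sqrt \<bar>z - - 1/b\<bar>)"
    by (simp add: fun_eq_iff phi1_abs_def h1_def mult_ac)
  moreover have "0 < integral {-a..-1/b} (\<lambda>z. h1 z / sqrt \<bar>z - - 1/b\<bar>)"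
    using \<open>-a < -1/b\<close> nonzero
    by (intro integral_pos_endpoint_singularity)
       (auto simp: h1_def quartic_def intro!: continuous_intros)
  ultimately show "Iint a b t 1 2 > 0" by (simp add: Iint_def vtx)
  have "phi2_abs a b t 1 = (\<lambda>z. h2 z / sqrt \<bar>z - - a\<bar>)"
    by (simp add: fun_eq_iff phi2_abs_def h2_def mult_ac)
  moreover have "0 < integral {-a..-1/b} (\<lambda>z. h2 z / sqrt \<bar>z - - a\<bar>)"
    using \<open>-a < -1/b\<close> nonzero
    by (intro integral_pos_endpoint_singularity)
       (auto simp: h2_def quartic_def intro!: continuous_intros)
  ultimately show "Jint a b t 1 2 > 0" by (simp add: Jint_def vtx)
qed

lemma ex1_balancing_scale:
  fixes x y u v :: real
  assumes "y > 0" "v > 0" "x / y = u / v"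
  shows "\<exists>!\<rho>. \<rho> > 0 \<and> \<rho> * x = u / \<rho> \<and> \<rho> * y = v / \<rho>"
proof (rule ex1I)
  have u: "u = x * v / y" using assms by (simp add: field_simps)
  show "sqrt (v / y) > 0 \<and> sqrt (v / y) * x = u / sqrt (v / y) \<and> sqrt (v / y) * y = v / sqrt (v / y)"
    using assms unfolding u by (simp add: field_simps real_sqrt_divide)
next
  fix \<rho> assume "\<rho> > 0 \<and> \<rho> * x = u / \<rho> \<and> \<rho> * y = v / \<rho>"
  then have "\<rho> > 0" "\<rho>\<^sup>2 = v / y" using assms by (auto simp: field_simps power2_eq_square)
  then show "\<rho> = sqrt (v / y)" by (simp add: real_sqrt_unique)
qed

theorem mainTheorem4:
  fixes a b t :: real
  assumes "a > 0" "b > 0" "t > 0" "1/t < 1/a" "1/a < b" "b < t"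
  shows "(\<forall>\<rho>1 \<rho>2. \<rho>1 > 0 \<longrightarrow> \<rho>2 > 0 \<longrightarrow> Qfun a b t \<rho>1 = Qfun a b t \<rho>2)
       \<and> (\<forall>\<rho>0. \<rho>0 > 0 \<longrightarrow> Qfun a b t \<rho>0 = 0 \<longrightarrow>
            (\<exists>!\<rho>. \<rho> > 0 \<and>
               Iint a b t \<rho> 1 + Iint a b t \<rho> 3 = Jint a b t \<rho> 1 + Jint a b t \<rho> 3
               \<and> Iint a b t \<rho> 2 = Jint a b t \<rho> 2))"
proof (intro conjI allI impI)
  fix \<rho>1 \<rho>2 :: real assume "\<rho>1 > 0" "\<rho>2 > 0"
  then show "Qfun a b t \<rho>1 = Qfun a b t \<rho>2"
    using Qfun_scale_invariant[of \<rho>1] Qfun_scale_invariant[of \<rho>2] by simp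
next
  fix \<rho>0 :: real assume "\<rho>0 > 0" "Qfun a b t \<rho>0 = 0"
  then have "Qfun a b t 1 = 0" using Qfun_scale_invariant[of \<rho>0] by simp
  then have ratios: "(Iint a b t 1 1 + Iint a b t 1 3) / Iint a b t 1 2
           = (Jint a b t 1 1 + Jint a b t 1 3) / Jint a b t 1 2"
    by (simp add: Qfun_def)
  have period_conditions: "Iint a b t \<rho> 1 + Iint a b t \<rho> 3 = Jint a b t \<rho> 1 + Jint a b t \<rho> 3
      \<and> Iint a b t \<rho> 2 = Jint a b t \<rho> 2 \<longleftrightarrow>
      \<rho> * (Iint a b t 1 1 + Iint a b t 1 3) = (Jint a b t 1 1 + Jint a b t 1 3) / \<rho>
      \<and> \<rho> * Iint a b t 1 2 = Jint a b t 1 2 / \<rho>" for \<rho>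
    by (simp add: Iint_scale[of a b t \<rho>] Jint_scale[of a b t \<rho>] distrib_left add_divide_distrib)
  show "\<exists>!\<rho>. \<rho> > 0 \<and>
          Iint a b t \<rho> 1 + Iint a b t \<rho> 3 = Jint a b t \<rho> 1 + Jint a b t \<rho> 3
          \<and> Iint a b t \<rho> 2 = Jint a b t \<rho> 2"
    unfolding period_conditions using ex1_balancing_scale[OF Iint_Jint_2_pos[OF assms] ratios] .
qed

end
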